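(* Let $(Q,\mathbf z)$ be a weak scaffold for $\pi_\bullet$. Then the modified tropical Plücker vector $\bar\pi_\bullet$ lies in $\mathrm{Dr}(k,n)(\mathbb Z)$, i.e. it is a tropical Plücker vector with all coordinates integers.
   Context: $Q$ is a finite loopless directed graph with $\mathbf z=(z_1,\dots,z_n)\in V(Q)^n$; directed distance $\delta$ uses cost 1 forwards and $k-1$ backwards along an edge (assumed finite, and $\delta(v,w)=1,\delta(w,v)=k-1$ for each edge $v\to w$). Its tropical Plücker vector is $\pi_I=-\frac1k\min_{x}\sum_{i\in I}\delta(x,z_i)$, $I\in\binom{[n]}k$. A coloring is $c:V(Q)\to\mathbb Z/k$ with $c(w)=c(v)+1$ for edges $v\to w$. $(Q,\mathbf z)$ is a weak scaffold for $\pi_\bullet$ if $\pi_\bullet$ is its tropical Plücker vector, $\pi_\bullet\in\mathrm{Dr}(k,n)$ (for all $S\in\binom{[n]}{k-2}$, $a<b<c<d\notin S$, $\min(\pi_{Sab}+\pi_{Scd},\pi_{Sac}+\pi_{Sbd},\pi_{Sad}+\pi_{Sbc})$ attained twice), and $Q$ admits a coloring $c$ (fixed). Identifying $\mathbb Z/k$ with $\{0,\dots,k-1\}$, the modified vector is $\bar\pi_I=\pi_I+\frac1k\sum_{i\in I}c(z_i)$. *)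

theory Defs
  imports Complex_Main
begin

text \<open>A quiver Q on the finite vertex type 'v is given by its edge relation E
  (E v w means there is an arrow v -> w).\<close>

inductive dwalk :: "('v \<Rightarrow> 'v \<Rightarrow> bool) \<Rightarrow> nat \<Rightarrow> 'v \<Rightarrow> 'v \<Rightarrow> nat \<Rightarrow> bool"
  for E :: "'v \<Rightarrow> 'v \<Rightarrow> bool" and k :: nat where
  refl: "dwalk E k v v 0"
| fwd: "E v u \<Longrightarrow> dwalk E k u w c \<Longrightarrow> dwalk E k v w (c + 1)"
| bwd: "E u v \<Longrightarrow> dwalk E k u w c \<Longrightarrow> dwalk E k v w (c + (k - 1))"

text \<open>Directed distance (meaningful when some walk exists).\<close>
definition ddist :: "('v \<Rightarrow> 'v \<Rightarrow> bool) \<Rightarrow> nat \<Rightarrow> 'v \<Rightarrow> 'v \<Rightarrow> nat" where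
  "ddist E k v w = (LEAST c. dwalk E k v w c)"

definition trop_plucker :: "('v::finite \<Rightarrow> 'v \<Rightarrow> bool) \<Rightarrow> nat \<Rightarrow> (nat \<Rightarrow> 'v) \<Rightarrow> nat set \<Rightarrow> real" where
  "trop_plucker E k z I =
     - (1 / real k) * real (Min ((\<lambda>x. \<Sum>i\<in>I. ddist E k x (z i)) ` UNIV))"

text \<open>Coloring c : V(Q) -> Z/k, with Z/k identified with {0,...,k-1}.\<close>
definition is_coloring :: "('v \<Rightarrow> 'v \<Rightarrow> bool) \<Rightarrow> nat \<Rightarrow> ('v \<Rightarrow> nat) \<Rightarrow> bool" where
  "is_coloring E k c \<longleftrightarrow> (\<forall>v. c v < k) \<and> (\<forall>v w. E v w \<longrightarrow> c w = (c v + 1) mod k)"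

definition ksubsets :: "nat \<Rightarrow> nat \<Rightarrow> nat set set" where
  "ksubsets k n = {I. I \<subseteq> {1..n} \<and> card I = k}"

definition min_twice :: "real \<Rightarrow> real \<Rightarrow> real \<Rightarrow> bool" where
  "min_twice x y w \<longleftrightarrow>
     (let m = min x (min y w) in
       (x = m \<and> y = m) \<or> (x = m \<and> w = m) \<or> (y = m \<and> w = m))"

definition in_Dr :: "nat \<Rightarrow> nat \<Rightarrow> (nat set \<Rightarrow> real) \<Rightarrow> bool" where
  "in_Dr k n p \<longleftrightarrow>
     (\<forall>S a b c d. S \<subseteq> {1..n} \<and> card S + 2 = k \<and>
        a \<in> {1..n} - S \<and> b \<in> {1..n} - S \<and> c \<in> {1..n} - S \<and> d \<in> {1..n} - S \<and>
        a < b \<and> b < c \<and> c < d \<longrightarrow>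
        min_twice (p (S \<union> {a, b}) + p (S \<union> {c, d}))
                  (p (S \<union> {a, c}) + p (S \<union> {b, d}))
                  (p (S \<union> {a, d}) + p (S \<union> {b, c})))"

definition in_Dr_int :: "nat \<Rightarrow> nat \<Rightarrow> (nat set \<Rightarrow> real) \<Rightarrow> bool" where
  "in_Dr_int k n p \<longleftrightarrow> in_Dr k n p \<and> (\<forall>I\<in>ksubsets k n. p I \<in> \<int>)"

definition weak_scaffold ::
  "('v::finite \<Rightarrow> 'v \<Rightarrow> bool) \<Rightarrow> nat \<Rightarrow> nat \<Rightarrow> (nat \<Rightarrow> 'v) \<Rightarrow> (nat set \<Rightarrow> real) \<Rightarrow> bool" where
  "weak_scaffold E k n z p \<longleftrightarrow>
     (\<forall>I\<in>ksubsets k n. p I = trop_plucker E k z I) \<and> in_Dr k n p \<and>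
     (\<exists>c. is_coloring E k c)"

definition modified_vec :: "nat \<Rightarrow> ('v \<Rightarrow> nat) \<Rightarrow> (nat \<Rightarrow> 'v) \<Rightarrow> (nat set \<Rightarrow> real) \<Rightarrow> nat set \<Rightarrow> real" where
  "modified_vec k c z p I = p I + (1 / real k) * real (\<Sum>i\<in>I. c (z i))"

end

theory Submission
  imports Defs
begin

text \<open>A coloring is a potential modulo k for the directed distance: a forward step adds 1 to
  the color and costs 1, a backward step subtracts 1 from the color and costs k - 1, which is
  -1 modulo k.  Hence for |I| = k the sum of the distances from any vertex x to the z_i is
  congruent to the sum of the colors c(z_i) (the k copies of c(x) cancel), so k times the
  modified vector is an integer divisible by k.  Adding the modular function
  I \<mapsto> (1/k) \<Sum>i\<in>I c(z_i) shifts all three terms of every three-term Pluecker relation by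
  the same amount, so it preserves the Dressian.\<close>

lemma dwalk_cost_mod_coloring:
  assumes col: "is_coloring E k c" and "dwalk E k v w d"
  shows "(d + c v) mod k = c w"
  using assms(2)
proof (induction rule: dwalk.induct)
  case (refl v)
  show ?case using col by (simp add: is_coloring_def)
next
  case (fwd v u w d)
  have "c u = (c v + 1) mod k"
    using col fwd.hyps(1) by (simp add: is_coloring_def)
  then have "(d + 1 + c v) mod k = (d + c u) mod k"
    by (simp add: mod_add_right_eq ac_simps)
  with fwd.IH show ?case by simp
next
  case (bwd u v w d)
  have "c v = (c u + 1) mod k" and "c u < k"
    using col bwd.hyps(1) by (simp_all add: is_coloring_def)
  then have "(d + (k - 1) + c v) mod k = (d + (k - 1) + (c u + 1)) mod k"
    by (simp only: mod_add_right_eq)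
  also have "\<dots> = (d + c u + k) mod k"
    using \<open>c u < k\<close> by (simp add: ac_simps)
  also have "\<dots> = (d + c u) mod k"
    by simp
  finally show ?case using bwd.IH by simp
qed

lemma ddist_mod_coloring:
  assumes "is_coloring E k c" and "\<exists>d. dwalk E k v w d"
  shows "(ddist E k v w + c v) mod k = c w"
proof -
  have "dwalk E k v w (ddist E k v w)"
    using assms(2) unfolding ddist_def by (blast intro: LeastI)
  then show ?thesis using assms(1) by (rule dwalk_cost_mod_coloring[rotated])
qed

lemma sum_ddist_mod_coloring:
  assumes col: "is_coloring E k c" and walks: "\<forall>v w. \<exists>d. dwalk E k v w d"
    and "finite I" and "card I = k"
  shows "(\<Sum>i\<in>I. ddist E k x (z i)) mod k = (\<Sum>i\<in>I. c (z i)) mod k"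
proof -
  have "(\<Sum>i\<in>I. ddist E k x (z i)) mod k = (\<Sum>i\<in>I. ddist E k x (z i) + c x) mod k"
    using \<open>card I = k\<close> by (simp add: sum.distrib)
  also have "\<dots> = (\<Sum>i\<in>I. (ddist E k x (z i) + c x) mod k) mod k"
    by (simp add: mod_sum_eq)
  also have "\<dots> = (\<Sum>i\<in>I. c (z i)) mod k"
    using ddist_mod_coloring[OF col] walks by simp
  finally show ?thesis .
qed

lemma modified_trop_plucker_int:
  assumes col: "is_coloring E k c" and walks: "\<forall>v w. \<exists>d. dwalk E k v w d"
    and "finite I" and "card I = k"
  shows "modified_vec k c z (trop_plucker E k z) I \<in> \<int>"
proof -
  let ?f = "\<lambda>x. \<Sum>i\<in>I. ddist E k x (z i)"
  define m where "m = Min (range ?f)"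
  define s where "s = (\<Sum>i\<in>I. c (z i))"
  have "m \<in> range ?f"
    unfolding m_def by (rule Min_in) auto
  then obtain x where "m = ?f x" by blast
  then have "m mod k = s mod k"
    using sum_ddist_mod_coloring[OF assms] by (simp add: s_def)
  moreover have "real s = real k * real (s div k) + real (s mod k)"
    and "real m = real k * real (m div k) + real (m mod k)"
    by (simp_all flip: of_nat_mult of_nat_add)
  moreover have "k > 0"
    using col by (auto simp: is_coloring_def)
  ultimately have "modified_vec k c z (trop_plucker E k z) I = of_int (int (s div k) - int (m div k))"
    unfolding modified_vec_def trop_plucker_def m_def [symmetric] s_def [symmetric]
    by (simp add: field_simps)
  then show ?thesis by simp
qed

lemma min_twice_add:
  "min_twice (x + t) (y + t) (w + t) = min_twice x y w"
  unfolding min_twice_def Let_def by (auto simp: min_def)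

lemma in_Dr_add_modular:
  fixes w :: "nat \<Rightarrow> real"
  assumes "in_Dr k n p"
  shows "in_Dr k n (\<lambda>I. p I + (\<Sum>i\<in>I. w i))"
  unfolding in_Dr_def
proof (intro allI impI)
  fix S a b c d
  assume h: "S \<subseteq> {1..n} \<and> card S + 2 = k \<and> a \<in> {1..n} - S \<and> b \<in> {1..n} - S \<and>
    c \<in> {1..n} - S \<and> d \<in> {1..n} - S \<and> a < b \<and> b < c \<and> c < d"
  then have "finite S" by (blast intro: finite_subset)
  define t where "t = 2 * sum w S + w a + w b + w c + w d"
  have "min_twice (p (S \<union> {a, b}) + p (S \<union> {c, d}))
                  (p (S \<union> {a, c}) + p (S \<union> {b, d}))
                  (p (S \<union> {a, d}) + p (S \<union> {b, c}))"
    using assms h unfolding in_Dr_def by blast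
  then have "min_twice (p (S \<union> {a, b}) + p (S \<union> {c, d}) + t)
                  (p (S \<union> {a, c}) + p (S \<union> {b, d}) + t)
                  (p (S \<union> {a, d}) + p (S \<union> {b, c}) + t)"
    by (simp only: min_twice_add)
  then show "min_twice
      (p (S \<union> {a, b}) + sum w (S \<union> {a, b}) + (p (S \<union> {c, d}) + sum w (S \<union> {c, d})))
      (p (S \<union> {a, c}) + sum w (S \<union> {a, c}) + (p (S \<union> {b, d}) + sum w (S \<union> {b, d})))
      (p (S \<union> {a, d}) + sum w (S \<union> {a, d}) + (p (S \<union> {b, c}) + sum w (S \<union> {b, c})))"
    using h \<open>finite S\<close> by (simp add: t_def algebra_simps)
qed

theorem proposition3p11:
  fixes E :: "'v::finite \<Rightarrow> 'v \<Rightarrow> bool"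
    and k n :: nat
    and z :: "nat \<Rightarrow> 'v"
    and p :: "nat set \<Rightarrow> real"
    and c :: "'v \<Rightarrow> nat"
  assumes loopless: "\<forall>v. \<not> E v v"
    and dist_finite: "\<forall>v w. \<exists>d. dwalk E k v w d"
    and edge_dist: "\<forall>v w. E v w \<longrightarrow> ddist E k v w = 1 \<and> ddist E k w v = k - 1"
    and scaffold: "weak_scaffold E k n z p"
    and coloring: "is_coloring E k c"
  shows "in_Dr_int k n (modified_vec k c z p)"
proof -
  have plucker: "\<forall>I\<in>ksubsets k n. p I = trop_plucker E k z I" and "in_Dr k n p"
    using scaffold unfolding weak_scaffold_def by auto
  have "modified_vec k c z p = (\<lambda>I. p I + (\<Sum>i\<in>I. real (c (z i)) / real k))"
    unfolding modified_vec_def by (simp add: sum_divide_distrib)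
  with \<open>in_Dr k n p\<close> have "in_Dr k n (modified_vec k c z p)"
    by (simp add: in_Dr_add_modular)
  moreover have "modified_vec k c z p I \<in> \<int>" if I: "I \<in> ksubsets k n" for I
  proof -
    have "finite I" "card I = k"
      using I unfolding ksubsets_def by (auto intro: finite_subset)
    then have "modified_vec k c z (trop_plucker E k z) I \<in> \<int>"
      by (rule modified_trop_plucker_int[OF coloring dist_finite])
    then show ?thesis
      using plucker I by (simp add: modified_vec_def)
  qed
  ultimately show ?thesis unfolding in_Dr_int_def by blast
qed

end
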